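(* Let $T$ be a tree on $n>3$ vertices, and suppose $u$ and $v$ are two distinct leaves of $T$ adjacent to the same vertex. Then $$\mathrm{rank}(\mathrm{Max4PC}_T)=\mathrm{rank}(\mathrm{Max4PC}_{T-u})=\mathrm{rank}(\mathrm{Max4PC}_{T-v}).$$
   Context: For a tree $T$ with vertex set $V$, $|V|=n$, let $d_{x,y}$ denote the distance between vertices $x,y$ in $T$. $\mathrm{Max4PC}_T$ is the $\binom{n}{2}\times\binom{n}{2}$ matrix with rows and columns indexed by the $2$-element subsets of $V$, whose entry in row $\{w,x\}$ and column $\{y,z\}$ is $\max\{d_{w,x}+d_{y,z},\ d_{w,y}+d_{x,z},\ d_{w,z}+d_{x,y}\}$. $T-u$ denotes the tree obtained from $T$ by deleting the leaf $u$. A leaf is a vertex of degree $1$. *)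

theory Defs
  imports Complex_Main
begin

definition is_walk :: "'a set set \<Rightarrow> 'a list \<Rightarrow> bool" where
  "is_walk E xs \<longleftrightarrow> xs \<noteq> [] \<and> (\<forall>i. Suc i < length xs \<longrightarrow> {xs ! i, xs ! Suc i} \<in> E)"

definition is_tree :: "'a set \<Rightarrow> 'a set set \<Rightarrow> bool" where
  "is_tree V E \<longleftrightarrow> finite V \<and> V \<noteq> {}
     \<and> (\<forall>e\<in>E. e \<subseteq> V \<and> card e = 2)
     \<and> (\<forall>x\<in>V. \<forall>y\<in>V. \<exists>xs. is_walk E xs \<and> hd xs = x \<and> last xs = y)
     \<and> card E = card V - 1"

definition gdist :: "'a set set \<Rightarrow> 'a \<Rightarrow> 'a \<Rightarrow> nat" where
  "gdist E x y = (LEAST n. \<exists>xs. is_walk E xs \<and> hd xs = x \<and> last xs = y \<and> length xs = Suc n)"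

definition is_leaf :: "'a set \<Rightarrow> 'a set set \<Rightarrow> 'a \<Rightarrow> bool" where
  "is_leaf V E u \<longleftrightarrow> u \<in> V \<and> card {e \<in> E. u \<in> e} = 1"

definition del_vert_V :: "'a set \<Rightarrow> 'a \<Rightarrow> 'a set" where
  "del_vert_V V u = V - {u}"

definition del_vert_E :: "'a set set \<Rightarrow> 'a \<Rightarrow> 'a set set" where
  "del_vert_E E u = {e \<in> E. u \<notin> e}"

definition pairs :: "'a set \<Rightarrow> 'a set set" where
  "pairs V = {p. p \<subseteq> V \<and> card p = 2}"

definition max4 :: "'a set set \<Rightarrow> 'a \<Rightarrow> 'a \<Rightarrow> 'a \<Rightarrow> 'a \<Rightarrow> real" where
  "max4 E w x y z = real (max (gdist E w x + gdist E y z)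
                       (max (gdist E w y + gdist E x z) (gdist E w z + gdist E x y)))"

text \<open>Entry of Max4PC_T in row {w,x} and column {y,z} (independent of the ordering).\<close>
definition Max4PC :: "'a set set \<Rightarrow> 'a set \<Rightarrow> 'a set \<Rightarrow> real" where
  "Max4PC E p q = Max {max4 E w x y z | w x y z. p = {w, x} \<and> q = {y, z}}"

definition rows_lin_indep :: "'i set \<Rightarrow> 'j set \<Rightarrow> ('i \<Rightarrow> 'j \<Rightarrow> real) \<Rightarrow> bool" where
  "rows_lin_indep K J M \<longleftrightarrow>
     (\<forall>c :: 'i \<Rightarrow> real. (\<forall>j\<in>J. (\<Sum>i\<in>K. c i * M i j) = 0) \<longrightarrow> (\<forall>i\<in>K. c i = 0))"

definition mat_rank :: "'i set \<Rightarrow> 'j set \<Rightarrow> ('i \<Rightarrow> 'j \<Rightarrow> real) \<Rightarrow> nat" where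
  "mat_rank I J M = Max {card K | K. K \<subseteq> I \<and> rows_lin_indep K J M}"

definition rank_Max4PC :: "'a set \<Rightarrow> 'a set set \<Rightarrow> nat" where
  "rank_Max4PC V E = mat_rank (pairs V) (pairs V) (Max4PC E)"

end

theory Submission
  imports Defs "HOL-Library.Function_Algebras"
begin

text \<open>Let \<open>u, v\<close> be leaves hanging at \<open>w\<close>. Since \<open>d(u,t) = d(w,t) + 1 = d(v,t)\<close> for every
  other vertex \<open>t\<close>, the row of \<open>Max4PC\<^sub>T\<close> indexed by \<open>{u,x}\<close> equals the row of \<open>{v,x}\<close> for
  \<open>x \<noteq> v\<close>, and a case analysis of the four-point maxima shows
  \<open>row {u,v} = row {v,w} + row {v,x} - row {w,x}\<close> for any fourth vertex \<open>x\<close>. Hence every row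
  (and, by symmetry, every column) involving \<open>u\<close> is a linear combination of rows (columns)
  avoiding \<open>u\<close>, so deleting them keeps the rank. The remaining submatrix is the matrix of
  \<open>T - u\<close>, because deleting a leaf does not change the other distances.\<close>

lemma is_walk_Nil [simp]: "\<not> is_walk E []"
  by (simp add: is_walk_def)

lemma is_walk_singleton [simp]: "is_walk E [x]"
  by (simp add: is_walk_def)

lemma is_walk_Cons_Cons [simp]: "is_walk E (x # y # zs) \<longleftrightarrow> {x, y} \<in> E \<and> is_walk E (y # zs)"
proof
  assume h: "is_walk E (x # y # zs)"
  then have edge: "{(x # y # zs) ! i, (x # y # zs) ! Suc i} \<in> E" if "Suc i < length (x # y # zs)" for i
    using that unfolding is_walk_def by blast
  have "is_walk E (y # zs)"
    unfolding is_walk_def using edge[of "Suc _"] by auto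
  then show "{x, y} \<in> E \<and> is_walk E (y # zs)" using edge[of 0] by simp
next
  assume h: "{x, y} \<in> E \<and> is_walk E (y # zs)"
  show "is_walk E (x # y # zs)" unfolding is_walk_def
  proof (intro conjI allI impI)
    fix i assume "Suc i < length (x # y # zs)"
    with h show "{(x # y # zs) ! i, (x # y # zs) ! Suc i} \<in> E"
      by (cases i) (auto simp: is_walk_def)
  qed simp
qed

lemma is_walk_append_iff:
  "xs \<noteq> [] \<Longrightarrow> ys \<noteq> [] \<Longrightarrow>
    is_walk E (xs @ ys) \<longleftrightarrow> is_walk E xs \<and> is_walk E ys \<and> {last xs, hd ys} \<in> E"
proof (induction xs rule: induct_list012)
  case (2 x) then show ?case by (cases ys) auto
qed auto

lemma is_walk_rev: "is_walk E xs \<Longrightarrow> is_walk E (rev xs)"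
proof (induction xs rule: induct_list012)
  case (3 x y zs)
  then show ?case
    using is_walk_append_iff[of "rev (y # zs)" "[x]" E] by (simp add: insert_commute)
qed auto

lemma is_walk_join:
  assumes "is_walk E xs" "is_walk E ys" "last xs = hd ys"
  shows "is_walk E (xs @ tl ys)"
proof (cases "tl ys")
  case (Cons z zs)
  then obtain y where "ys = y # z # zs" by (cases ys) auto
  moreover have "xs \<noteq> []" using assms(1) by auto
  ultimately show ?thesis using assms by (simp add: is_walk_append_iff)
qed (use assms in simp)

lemma is_walk_mono: "is_walk E xs \<Longrightarrow> E \<subseteq> E' \<Longrightarrow> is_walk E' xs"
  unfolding is_walk_def by blast

definition conn :: "'a set set \<Rightarrow> 'a \<Rightarrow> 'a \<Rightarrow> bool" where
  "conn E a b \<longleftrightarrow> (\<exists>xs. is_walk E xs \<and> hd xs = a \<and> last xs = b)"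

lemma gdist_le_length:
  "is_walk E xs \<Longrightarrow> hd xs = a \<Longrightarrow> last xs = b \<Longrightarrow> gdist E a b \<le> length xs - 1"
  unfolding gdist_def by (rule Least_le) (cases xs; auto)

lemma gdist_shortest_walk:
  assumes "conn E a b"
  obtains xs where "is_walk E xs" "hd xs = a" "last xs = b" "length xs = Suc (gdist E a b)"
proof -
  from assms obtain xs where "is_walk E xs" "hd xs = a" "last xs = b"
    unfolding conn_def by blast
  then have "\<exists>n xs. is_walk E xs \<and> hd xs = a \<and> last xs = b \<and> length xs = Suc n"
    by (intro exI[of _ "length xs - 1"] exI[of _ xs]) (cases xs; auto)
  from LeastI_ex[OF this] show ?thesis
    using that unfolding gdist_def by blast
qed

lemma gdist_self [simp]: "gdist E a a = 0"
  using gdist_le_length[of E "[a]" a a] by simp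

lemma gdist_sym: "gdist E a b = gdist E b a"
proof -
  have "(\<exists>xs. is_walk E xs \<and> hd xs = a \<and> last xs = b \<and> length xs = n)
      \<longleftrightarrow> (\<exists>xs. is_walk E xs \<and> hd xs = b \<and> last xs = a \<and> length xs = n)" for a b n
    by (metis is_walk_rev hd_rev last_rev length_rev rev_rev_ident)
  then show ?thesis unfolding gdist_def by simp
qed

lemma gdist_triangle:
  assumes "conn E a b" "conn E b c"
  shows "gdist E a c \<le> gdist E a b + gdist E b c"
proof -
  obtain xs where xs: "is_walk E xs" "hd xs = a" "last xs = b" "length xs = Suc (gdist E a b)"
    using assms(1) by (rule gdist_shortest_walk)
  obtain ys where ys: "is_walk E ys" "hd ys = b" "last ys = c" "length ys = Suc (gdist E b c)"
    using assms(2) by (rule gdist_shortest_walk)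
  have "is_walk E (xs @ tl ys)" using xs ys by (intro is_walk_join) simp_all
  moreover have "hd (xs @ tl ys) = a" "last (xs @ tl ys) = c"
    using xs ys by (cases xs; cases ys; auto)+
  ultimately show ?thesis
    using gdist_le_length[of E "xs @ tl ys" a c] xs(4) ys(4) by simp
qed

locale pendant_edge =
  fixes E :: "'a set set" and u w :: 'a
  assumes card_edges: "\<forall>e\<in>E. card e = 2"
    and pendant: "card {e \<in> E. u \<in> e} = 1"
    and edge: "{u, w} \<in> E"
begin

lemma pendant_neq_neighbour: "u \<noteq> w"
  using card_edges edge by fastforce

lemma neighbour_unique: "{u, y} \<in> E \<Longrightarrow> y = w"
proof -
  assume "{u, y} \<in> E"
  moreover obtain e where e: "{e \<in> E. u \<in> e} = {e}"
    using pendant by (rule card_1_singletonE)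
  ultimately have "{u, y} \<in> {e}" "{u, w} \<in> {e}"
    using edge unfolding e[symmetric] by simp_all
  then have "{u, y} = {u, w}" by simp
  then show "y = w" using pendant_neq_neighbour by (auto simp: doubleton_eq_iff)
qed

lemma gdist_pendant:
  assumes "t \<noteq> u" "conn E w t"
  shows "gdist E u t = gdist E w t + 1"
proof (rule antisym)
  obtain xs where xs: "is_walk E xs" "hd xs = w" "last xs = t" "length xs = Suc (gdist E w t)"
    using assms(2) by (rule gdist_shortest_walk)
  have walk: "is_walk E (u # xs)" using xs edge by (cases xs) auto
  then show "gdist E u t \<le> gdist E w t + 1"
    using gdist_le_length[of E "u # xs" u t] xs by (cases xs) auto
  have "conn E u t" unfolding conn_def using walk xs by (intro exI[of _ "u # xs"]) (cases xs; auto)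
  then obtain ys where ys: "is_walk E ys" "hd ys = u" "last ys = t" "length ys = Suc (gdist E u t)"
    by (rule gdist_shortest_walk)
  then obtain y zs where ys_eq: "ys = u # y # zs"
    using assms(1) by (cases ys; cases "tl ys") auto
  then have "y = w" using ys(1) by (simp add: neighbour_unique)
  then show "gdist E w t + 1 \<le> gdist E u t"
    using gdist_le_length[of E "w # zs" w t] ys ys_eq by simp
qed

text \<open>A walk through the pendant vertex enters and leaves it via \<open>w\<close>, so the detour can be cut out.\<close>
lemma walk_avoiding_pendant:
  "is_walk E xs \<Longrightarrow> hd xs \<noteq> u \<Longrightarrow> last xs \<noteq> u \<Longrightarrow>
    \<exists>ys. is_walk (del_vert_E E u) ys \<and> hd ys = hd xs \<and> last ys = last xs \<and> length ys \<le> length xs"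
proof (induction "length xs" arbitrary: xs rule: less_induct)
  case less
  show ?case
  proof (cases "u \<in> set xs")
    case False
    have "is_walk (del_vert_E E u) xs" unfolding is_walk_def del_vert_E_def
    proof (intro conjI allI impI)
      fix i assume i: "Suc i < length xs"
      then have "xs ! i \<in> set xs" "xs ! Suc i \<in> set xs" by simp_all
      then show "{xs ! i, xs ! Suc i} \<in> {e \<in> E. u \<notin> e}"
        using False less.prems(1) i unfolding is_walk_def by auto
    qed (use less.prems(1) in auto)
    then show ?thesis by blast
  next
    case True
    then obtain as bs where xs: "xs = as @ u # bs" by (meson split_list)
    have as: "as \<noteq> []" and bs: "bs \<noteq> []" using xs less.prems(2,3) by auto
    then have walks: "is_walk E as" "is_walk E (u # bs)" "{u, last as} \<in> E"
      using is_walk_append_iff[of as "u # bs" E] less.prems(1) xs by (auto simp: insert_commute)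
    then have "last as = w" by (simp add: neighbour_unique)
    moreover have "is_walk E bs" "hd bs = w"
      using walks(2) bs by (cases bs; auto simp: neighbour_unique)+
    ultimately have "is_walk E (as @ tl bs)"
      using walks(1) by (intro is_walk_join) simp_all
    moreover have "hd (as @ tl bs) = hd xs" "last (as @ tl bs) = last xs"
      using xs as bs \<open>hd bs = w\<close> \<open>last as = w\<close> by (cases bs; auto)+
    moreover have "length (as @ tl bs) < length xs" using xs bs by simp
    ultimately obtain ys where "is_walk (del_vert_E E u) ys" "hd ys = hd xs" "last ys = last xs"
        "length ys \<le> length (as @ tl bs)"
      using less.hyps[of "as @ tl bs"] less.prems(2,3) by auto
    then show ?thesis using \<open>length (as @ tl bs) < length xs\<close> by (intro exI[of _ ys]) simp
  qed
qed

lemma gdist_del_vert_E: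
  assumes "a \<noteq> u" "b \<noteq> u" "conn E a b"
  shows "gdist (del_vert_E E u) a b = gdist E a b"
proof (rule antisym)
  obtain xs where xs: "is_walk E xs" "hd xs = a" "last xs = b" "length xs = Suc (gdist E a b)"
    using assms(3) by (rule gdist_shortest_walk)
  then obtain ys where ys: "is_walk (del_vert_E E u) ys" "hd ys = a" "last ys = b" "length ys \<le> length xs"
    using walk_avoiding_pendant assms(1,2) by blast
  then show "gdist (del_vert_E E u) a b \<le> gdist E a b"
    using gdist_le_length[OF ys(1-3)] xs(4) by simp
  have "conn (del_vert_E E u) a b" using ys unfolding conn_def by blast
  then obtain zs where zs: "is_walk (del_vert_E E u) zs" "hd zs = a" "last zs = b"
      "length zs = Suc (gdist (del_vert_E E u) a b)"
    by (rule gdist_shortest_walk)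
  have "is_walk E zs" using zs(1) by (rule is_walk_mono) (auto simp: del_vert_E_def)
  then show "gdist E a b \<le> gdist (del_vert_E E u) a b"
    using gdist_le_length[OF _ zs(2,3)] zs(4) by simp
qed

end

text \<open>Rows of a matrix \<open>M\<close> restricted to the columns \<open>J\<close> are vectors in \<open>'j \<Rightarrow> real\<close>,
  which is a real vector space under pointwise operations.\<close>

definition fscale :: "real \<Rightarrow> ('j \<Rightarrow> real) \<Rightarrow> 'j \<Rightarrow> real" where
  "fscale c f = (\<lambda>j. c * f j)"

interpretation fv: vector_space fscale
  by unfold_locales (auto simp: fun_eq_iff fscale_def algebra_simps)

definition row_vec :: "'j set \<Rightarrow> ('i \<Rightarrow> 'j \<Rightarrow> real) \<Rightarrow> 'i \<Rightarrow> 'j \<Rightarrow> real" where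
  "row_vec J M i = (\<lambda>j. if j \<in> J then M i j else 0)"

lemma sum_fscale_row_vec_apply:
  "(\<Sum>i\<in>K. fscale (c i) (row_vec J M i)) j = (if j \<in> J then (\<Sum>i\<in>K. c i * M i j) else 0)"
proof -
  have "(\<Sum>i\<in>K. f i) j = (\<Sum>i\<in>K. f i j)" for f :: "_ \<Rightarrow> _ \<Rightarrow> real"
    by (induction K rule: infinite_finite_induct) auto
  then show ?thesis by (auto simp: fscale_def row_vec_def)
qed

lemma rows_lin_indep_inj_row_vec:
  assumes "finite K" "rows_lin_indep K J M"
  shows "inj_on (row_vec J M) K"
proof (rule inj_onI, rule ccontr)
  fix a b assume ab: "a \<in> K" "b \<in> K" "row_vec J M a = row_vec J M b" "a \<noteq> b"
  define c where "c i = (if i = a then 1 else if i = b then -1 else 0 :: real)" for i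
  have "(\<Sum>i\<in>K. c i * M i j) = M a j - M b j" for j
  proof -
    have "(\<Sum>i\<in>K. c i * M i j) = (\<Sum>i\<in>K. (if i = a then M i j else 0) - (if i = b then M i j else 0))"
      using ab(4) by (intro sum.cong) (auto simp: c_def)
    also have "\<dots> = M a j - M b j" using ab assms(1) by (simp add: sum_subtractf)
    finally show ?thesis .
  qed
  moreover have "M a j = M b j" if "j \<in> J" for j
    using fun_cong[OF ab(3), of j] that by (simp add: row_vec_def)
  ultimately have "\<forall>j\<in>J. (\<Sum>i\<in>K. c i * M i j) = 0" by simp
  then have "c a = 0" using assms(2) ab(1) unfolding rows_lin_indep_def by blast
  then show False by (simp add: c_def)
qed

lemma rows_lin_indep_iff_independent:
  fixes M :: "'i \<Rightarrow> 'j \<Rightarrow> real"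
  assumes "finite K"
  shows "rows_lin_indep K J M \<longleftrightarrow> inj_on (row_vec J M) K \<and> fv.independent (row_vec J M ` K)"
proof
  assume indep: "rows_lin_indep K J M"
  show "inj_on (row_vec J M) K \<and> fv.independent (row_vec J M ` K)"
  proof
    show inj: "inj_on (row_vec J M) K"
      using assms indep by (rule rows_lin_indep_inj_row_vec)
    show "fv.independent (row_vec J M ` K)"
    proof
      assume "fv.dependent (row_vec J M ` K)"
      then obtain c where c: "\<exists>r\<in>row_vec J M ` K. c r \<noteq> 0"
        "(\<Sum>r\<in>row_vec J M ` K. fscale (c r) r) = 0"
        using fv.dependent_finite[of "row_vec J M ` K"] assms by auto
      have zero: "(\<Sum>i\<in>K. fscale (c (row_vec J M i)) (row_vec J M i)) = 0"
        using c(2) by (simp add: sum.reindex[OF inj])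
      have "\<forall>j\<in>J. (\<Sum>i\<in>K. c (row_vec J M i) * M i j) = 0"
        using fun_cong[OF zero] by (simp add: sum_fscale_row_vec_apply) metis
      then have "\<forall>i\<in>K. c (row_vec J M i) = 0"
        using indep[unfolded rows_lin_indep_def, rule_format, of "\<lambda>i. c (row_vec J M i)"] by blast
      then show False using c(1) by blast
    qed
  qed
next
  assume "inj_on (row_vec J M) K \<and> fv.independent (row_vec J M ` K)"
  then have inj: "inj_on (row_vec J M) K" and ind: "fv.independent (row_vec J M ` K)" by auto
  show "rows_lin_indep K J M" unfolding rows_lin_indep_def
  proof (intro allI impI)
    fix c :: "'i \<Rightarrow> real" assume c: "\<forall>j\<in>J. (\<Sum>i\<in>K. c i * M i j) = 0"
    define c' where "c' r = c (inv_into K (row_vec J M) r)" for r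
    have "(\<Sum>r\<in>row_vec J M ` K. fscale (c' r) r) = (\<Sum>i\<in>K. fscale (c i) (row_vec J M i))"
      by (simp add: sum.reindex[OF inj] c'_def inj)
    also have "\<dots> = 0" using c by (auto simp: fun_eq_iff sum_fscale_row_vec_apply)
    finally have "\<forall>r\<in>row_vec J M ` K. c' r = 0"
      using fv.dependent_finite[of "row_vec J M ` K"] assms ind by auto
    then show "\<forall>i\<in>K. c i = 0" by (auto simp: c'_def inj)
  qed
qed

lemma mat_rank_ge:
  "finite I \<Longrightarrow> K \<subseteq> I \<Longrightarrow> rows_lin_indep K J M \<Longrightarrow> card K \<le> mat_rank I J M"
  unfolding mat_rank_def
  by (rule Max_ge[OF finite_subset[of _ "card ` Pow I"]]) auto

lemma mat_rank_attained:
  assumes "finite I"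
  obtains K where "K \<subseteq> I" "rows_lin_indep K J M" "card K = mat_rank I J M"
proof -
  have "mat_rank I J M \<in> {card K | K. K \<subseteq> I \<and> rows_lin_indep K J M}"
    unfolding mat_rank_def using assms
    by (intro Max_in[OF finite_subset[of _ "card ` Pow I"]]) (auto simp: rows_lin_indep_def)
  then show ?thesis using that by auto
qed

lemma mat_rank_mono_rows:
  assumes "finite I" "I' \<subseteq> I"
  shows "mat_rank I' J M \<le> mat_rank I J M"
proof -
  obtain K where K: "K \<subseteq> I'" "rows_lin_indep K J M" "card K = mat_rank I' J M"
    by (rule mat_rank_attained[OF finite_subset[OF assms(2,1)]])
  have "K \<subseteq> I" using K(1) assms(2) by blast
  from mat_rank_ge[OF assms(1) this K(2)] K(3) show ?thesis by simp
qed

lemma mat_rank_cong: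
  assumes "\<And>i j. i \<in> I \<Longrightarrow> j \<in> J \<Longrightarrow> M i j = M' i j"
  shows "mat_rank I J M = mat_rank I J M'"
proof -
  have "rows_lin_indep K J M = rows_lin_indep K J M'" if "K \<subseteq> I" for K
  proof -
    have "(\<Sum>i\<in>K. c i * M i j) = (\<Sum>i\<in>K. c i * M' i j)" if "j \<in> J" for c j
      using assms \<open>K \<subseteq> I\<close> that by (intro sum.cong) auto
    then show ?thesis unfolding rows_lin_indep_def by simp
  qed
  then have "{card K | K. K \<subseteq> I \<and> rows_lin_indep K J M} = {card K | K. K \<subseteq> I \<and> rows_lin_indep K J M'}"
    by blast
  then show ?thesis unfolding mat_rank_def by simp
qed

definition in_row_span :: "'i set \<Rightarrow> 'j set \<Rightarrow> ('i \<Rightarrow> 'j \<Rightarrow> real) \<Rightarrow> 'i \<Rightarrow> bool" where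
  "in_row_span I' J M i \<longleftrightarrow> (\<exists>S a. S \<subseteq> I' \<and> finite S \<and> (\<forall>j\<in>J. M i j = (\<Sum>s\<in>S. a s * M s j)))"

lemma in_row_spanI:
  "S \<subseteq> I' \<Longrightarrow> finite S \<Longrightarrow> (\<And>j. j \<in> J \<Longrightarrow> M i j = (\<Sum>s\<in>S. a s * M s j)) \<Longrightarrow>
    in_row_span I' J M i"
  unfolding in_row_span_def by blast

lemma in_row_span_eq_row:
  "i' \<in> I' \<Longrightarrow> (\<And>j. j \<in> J \<Longrightarrow> M i j = M i' j) \<Longrightarrow> in_row_span I' J M i"
  by (rule in_row_spanI[where S = "{i'}" and a = "\<lambda>_. 1"]) auto

lemma row_vec_in_span:
  assumes "in_row_span I' J M i"
  shows "row_vec J M i \<in> fv.span (row_vec J M ` I')"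
proof -
  obtain S a where S: "S \<subseteq> I'" "finite S" "\<forall>j\<in>J. M i j = (\<Sum>s\<in>S. a s * M s j)"
    using assms unfolding in_row_span_def by blast
  have "row_vec J M i = (\<Sum>s\<in>S. fscale (a s) (row_vec J M s))"
    using S(3) by (simp add: fun_eq_iff sum_fscale_row_vec_apply) (simp add: row_vec_def)
  also have "\<dots> \<in> fv.span (row_vec J M ` I')"
    using S(1) by (intro fv.span_sum fv.span_scale fv.span_base) auto
  finally show ?thesis .
qed

text \<open>Deleting rows that are combinations of the remaining ones keeps the rank: a maximal
  independent set of remaining rows spans all rows, and no independent set is larger.\<close>
lemma mat_rank_reduce_rows:
  assumes fin: "finite I" and sub: "I' \<subseteq> I"
    and span: "\<And>i. i \<in> I \<Longrightarrow> in_row_span I' J M i"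
  shows "mat_rank I J M = mat_rank I' J M"
proof (rule antisym[OF _ mat_rank_mono_rows[OF fin sub]])
  obtain K where K: "K \<subseteq> I" "rows_lin_indep K J M" "card K = mat_rank I J M"
    using fin by (rule mat_rank_attained)
  have finI': "finite I'" and finK: "finite K" using fin sub K(1) by (auto intro: finite_subset)
  obtain B where B: "B \<subseteq> row_vec J M ` I'" "fv.independent B" "row_vec J M ` I' \<subseteq> fv.span B"
    using fv.maximal_independent_subset by blast
  obtain K' where K': "K' \<subseteq> I'" "inj_on (row_vec J M) K'" "B = row_vec J M ` K'"
    using subset_image_inj[THEN iffD1, OF B(1)] by blast
  have finK': "finite K'" using K'(1) finI' by (rule finite_subset)
  have indK: "inj_on (row_vec J M) K" "fv.independent (row_vec J M ` K)"
    using K(2) finK by (simp_all add: rows_lin_indep_iff_independent)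
  have "row_vec J M ` K \<subseteq> fv.span B"
    using row_vec_in_span[OF span] K(1) fv.span_minimal[OF B(3) fv.subspace_span] by blast
  then have "card (row_vec J M ` K) \<le> card B"
    using fv.independent_span_bound[OF _ indK(2)] finK' K'(3) by simp
  then have "card K \<le> card K'"
    using K'(2,3) indK(1) by (simp add: card_image)
  also have "card K' \<le> mat_rank I' J M"
    using finK' K'(1-3) B(2) by (intro mat_rank_ge[OF finI']) (simp_all add: rows_lin_indep_iff_independent)
  finally show "mat_rank I J M \<le> mat_rank I' J M" using K(3) by simp
qed

text \<open>Deleting columns that are combinations of the remaining ones preserves every linear
  dependence among rows.\<close>
lemma mat_rank_reduce_cols:
  fixes M :: "'i \<Rightarrow> 'j \<Rightarrow> real"
  assumes sub: "J' \<subseteq> J"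
    and span: "\<And>j. j \<in> J \<Longrightarrow> in_row_span J' I (\<lambda>j i. M i j) j"
  shows "mat_rank I J M = mat_rank I J' M"
proof -
  have "rows_lin_indep K J M \<longleftrightarrow> rows_lin_indep K J' M" if KI: "K \<subseteq> I" for K
  proof
    assume "rows_lin_indep K J' M" then show "rows_lin_indep K J M"
      using sub unfolding rows_lin_indep_def by blast
  next
    assume indep: "rows_lin_indep K J M"
    show "rows_lin_indep K J' M" unfolding rows_lin_indep_def
    proof (intro allI impI)
      fix c :: "'i \<Rightarrow> real" assume c: "\<forall>j\<in>J'. (\<Sum>i\<in>K. c i * M i j) = 0"
      have "(\<Sum>i\<in>K. c i * M i j) = 0" if j: "j \<in> J" for j
      proof -
        obtain S a where S: "S \<subseteq> J'" "finite S" "\<forall>i\<in>I. M i j = (\<Sum>s\<in>S. a s * M i s)"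
          using span[OF j] unfolding in_row_span_def by blast
        have "(\<Sum>i\<in>K. c i * M i j) = (\<Sum>i\<in>K. \<Sum>s\<in>S. a s * (c i * M i s))"
          using S(3) KI by (intro sum.cong) (auto simp: sum_distrib_left mult.left_commute)
        also have "\<dots> = (\<Sum>s\<in>S. a s * (\<Sum>i\<in>K. c i * M i s))"
          by (subst sum.swap) (simp add: sum_distrib_left)
        also have "\<dots> = 0" using c S(1) by (intro sum.neutral) auto
        finally show ?thesis .
      qed
      then show "\<forall>i\<in>K. c i = 0" using indep unfolding rows_lin_indep_def by blast
    qed
  qed
  then have "{card K | K. K \<subseteq> I \<and> rows_lin_indep K J M} = {card K | K. K \<subseteq> I \<and> rows_lin_indep K J' M}"
    by blast
  then show ?thesis unfolding mat_rank_def by simp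
qed

lemma mat_rank_reduce_symmetric:
  assumes fin: "finite I" and sub: "I' \<subseteq> I"
    and sym: "\<And>i j. i \<in> I \<Longrightarrow> j \<in> I \<Longrightarrow> M i j = M j i"
    and span: "\<And>i. i \<in> I \<Longrightarrow> in_row_span I' I M i"
  shows "mat_rank I I M = mat_rank I' I' M"
proof -
  have "in_row_span I' I' (\<lambda>j i. M i j) j" if "j \<in> I" for j
  proof -
    obtain S a where S: "S \<subseteq> I'" "finite S" "\<forall>i\<in>I. M j i = (\<Sum>s\<in>S. a s * M s i)"
      using span[OF \<open>j \<in> I\<close>] unfolding in_row_span_def by blast
    have "M i j = (\<Sum>s\<in>S. a s * M i s)" if "i \<in> I'" for i
    proof -
      have "M i j = M j i" using sym sub that \<open>j \<in> I\<close> by blast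
      also have "\<dots> = (\<Sum>s\<in>S. a s * M s i)" using S(3) sub that by blast
      also have "\<dots> = (\<Sum>s\<in>S. a s * M i s)"
        using S(1) sub that by (intro sum.cong[OF refl]) (metis sym subsetD)
      finally show ?thesis .
    qed
    then show ?thesis using S(1,2) by (intro in_row_spanI) auto
  qed
  then have "mat_rank I' I M = mat_rank I' I' M"
    using sub by (intro mat_rank_reduce_cols) auto
  then show ?thesis using mat_rank_reduce_rows[OF fin sub span] by simp
qed


lemma max4_swap_left: "max4 E x w y z = max4 E w x y z"
  unfolding max4_def gdist_sym[of E x w] by (simp add: max_def)

lemma max4_swap_right: "max4 E w x z y = max4 E w x y z"
  unfolding max4_def gdist_sym[of E z y] by (simp add: max_def)

lemma max4_swap_pairs: "max4 E y z w x = max4 E w x y z"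
  unfolding max4_def gdist_sym[of E y w] gdist_sym[of E y x] gdist_sym[of E z w] gdist_sym[of E z x]
  by (simp add: max_def)

lemma Max4PC_doubleton: "Max4PC E {a, b} {c, d} = max4 E a b c d"
proof -
  have "{max4 E w x y z | w x y z. {a, b} = {w, x} \<and> {c, d} = {y, z}} = {max4 E a b c d}"
    by (auto simp: doubleton_eq_iff max4_swap_left max4_swap_right)
  then show ?thesis unfolding Max4PC_def by simp
qed

lemma doubleton_in_pairs_iff: "{a, b} \<in> pairs V \<longleftrightarrow> a \<in> V \<and> b \<in> V \<and> a \<noteq> b"
  unfolding pairs_def by (cases "a = b") auto

lemma pairsE:
  assumes "p \<in> pairs V"
  obtains a b where "p = {a, b}" "a \<noteq> b" "a \<in> V" "b \<in> V"
  using assms unfolding pairs_def card_2_iff by blast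

lemma finite_pairs: "finite V \<Longrightarrow> finite (pairs V)"
  unfolding pairs_def by (rule finite_subset[of _ "Pow V"]) auto

lemma Max4PC_commute: "p \<in> pairs V \<Longrightarrow> q \<in> pairs V \<Longrightarrow> Max4PC E p q = Max4PC E q p"
  by (elim pairsE) (simp add: Max4PC_doubleton max4_swap_pairs)

locale connected_graph =
  fixes V :: "'a set" and E :: "'a set set"
  assumes finite_vertices: "finite V"
    and edges: "\<forall>e\<in>E. e \<subseteq> V \<and> card e = 2"
    and connected: "\<And>x y. x \<in> V \<Longrightarrow> y \<in> V \<Longrightarrow> conn E x y"

lemma is_tree_connected_graph: "is_tree V E \<Longrightarrow> connected_graph V E"
  unfolding is_tree_def connected_graph_def conn_def by blast

locale cherry = connected_graph +
  fixes u v w :: 'a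
  assumes leaf_u: "is_leaf V E u" and leaf_v: "is_leaf V E v" and leaves_neq: "u \<noteq> v"
    and edge_u: "{u, w} \<in> E" and edge_v: "{v, w} \<in> E"
begin

sublocale Pu: pendant_edge E u w
  using edges leaf_u edge_u by unfold_locales (auto simp: is_leaf_def)

sublocale Pv: pendant_edge E v w
  using edges leaf_v edge_v by unfold_locales (auto simp: is_leaf_def)

lemma cherry_swap: "cherry V E v u w"
  using leaf_u leaf_v leaves_neq edge_u edge_v by unfold_locales auto

lemma cherry_in_vertices: "u \<in> V" "v \<in> V" "w \<in> V"
  using leaf_u leaf_v edges edge_u by (auto simp: is_leaf_def)

lemma gdist_leaves:
  assumes "t \<in> V"
  shows "t \<noteq> u \<Longrightarrow> gdist E u t = gdist E w t + 1" "t \<noteq> u \<Longrightarrow> gdist E t u = gdist E w t + 1"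
    and "t \<noteq> v \<Longrightarrow> gdist E v t = gdist E w t + 1" "t \<noteq> v \<Longrightarrow> gdist E t v = gdist E w t + 1"
  using Pu.gdist_pendant Pv.gdist_pendant connected[OF cherry_in_vertices(3) assms]
  by (simp_all add: gdist_sym[of E t])

lemma gdist_le_via_center: "a \<in> V \<Longrightarrow> b \<in> V \<Longrightarrow> gdist E a b \<le> gdist E w a + gdist E w b"
  using gdist_triangle[of E a w b] connected cherry_in_vertices(3) by (simp add: gdist_sym[of E a w])

lemma max4_swap_leaves:
  assumes "x \<in> V" "y \<in> V" "z \<in> V" "x \<noteq> u" "x \<noteq> v" "y \<noteq> z"
  shows "max4 E u x y z = max4 E v x y z"
  using assms gdist_le_via_center[of x y] gdist_le_via_center[of x z] gdist_le_via_center[of y z]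
    cherry_in_vertices leaves_neq Pu.pendant_neq_neighbour Pv.pendant_neq_neighbour
  unfolding max4_def
  by (cases "y = u"; cases "y = v"; cases "z = u"; cases "z = v") (simp_all add: gdist_leaves max_def)

text \<open>The four-point maxima reduce to sums of distances to \<open>w\<close>, and the identity can be checked
  case by case.\<close>
lemma max4_cherry_relation:
  assumes "x \<in> V" "y \<in> V" "z \<in> V" "x \<noteq> u" "x \<noteq> v" "x \<noteq> w" "y \<noteq> z"
  shows "max4 E u v y z + max4 E w x y z = max4 E v w y z + max4 E v x y z"
  using assms gdist_le_via_center[of x y] gdist_le_via_center[of x z] gdist_le_via_center[of y z]
    cherry_in_vertices leaves_neq Pu.pendant_neq_neighbour Pv.pendant_neq_neighbour
  unfolding max4_def
  by (cases "y = u"; cases "y = v"; cases "z = u"; cases "z = v") (simp_all add: gdist_leaves max_def)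


lemma Max4PC_row_in_span:
  assumes card: "3 < card V" and i: "i \<in> pairs V"
  shows "in_row_span (pairs (V - {u})) (pairs V) (Max4PC E) i"
proof (cases "u \<in> i")
  case False
  then show ?thesis using i by (intro in_row_span_eq_row[of i]) (auto simp: pairs_def)
next
  case True
  then obtain x where i_eq: "i = {u, x}" and x: "x \<in> V" "x \<noteq> u"
    using i by (elim pairsE) (auto simp: insert_commute)
  note neq = leaves_neq Pu.pendant_neq_neighbour Pv.pendant_neq_neighbour
  note vertices = cherry_in_vertices
  show ?thesis
  proof (cases "x = v")
    case False
    have "Max4PC E i q = Max4PC E {v, x} q" if "q \<in> pairs V" for q
      using that x False by (elim pairsE) (simp add: i_eq Max4PC_doubleton max4_swap_leaves)
    then show ?thesis
      using x False vertices neq by (intro in_row_span_eq_row[of "{v, x}"]) (auto simp: doubleton_in_pairs_iff)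
  next
    case True
    have "\<not> V \<subseteq> {u, v, w}"
    proof
      assume "V \<subseteq> {u, v, w}"
      then have "card V \<le> card {u, v, w}" by (intro card_mono) simp_all
      also have "\<dots> \<le> 3" by (simp add: card_insert_if)
      finally show False using card by simp
    qed
    then obtain y where y: "y \<in> V" "y \<noteq> u" "y \<noteq> v" "y \<noteq> w" by blast
    define S where "S = {{v, w}, {v, y}, {w, y}}"
    define a where "a s = (if s = {w, y} then -1 else 1 :: real)" for s
    have S_distinct: "{v, w} \<noteq> {v, y}" "{v, w} \<noteq> {w, y}" "{v, y} \<noteq> {w, y}"
      using y neq by (auto simp: doubleton_eq_iff)
    show ?thesis
    proof (rule in_row_spanI[where S = S and a = a])
      show "S \<subseteq> pairs (V - {u})" "finite S"
        using y vertices neq by (auto simp: S_def doubleton_in_pairs_iff)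
      fix q assume "q \<in> pairs V"
      then obtain c d where q: "q = {c, d}" "c \<noteq> d" "c \<in> V" "d \<in> V" by (elim pairsE)
      have "Max4PC E i q = Max4PC E {v, w} q + Max4PC E {v, y} q - Max4PC E {w, y} q"
        using max4_cherry_relation[of y c d] y q by (simp add: i_eq True Max4PC_doubleton)
      also have "\<dots> = (\<Sum>s\<in>S. a s * Max4PC E s q)"
        using S_distinct by (simp add: S_def a_def)
      finally show "Max4PC E i q = (\<Sum>s\<in>S. a s * Max4PC E s q)" .
    qed
  qed
qed

lemma Max4PC_del_leaf:
  assumes "p \<in> pairs (V - {u})" "q \<in> pairs (V - {u})"
  shows "Max4PC (del_vert_E E u) p q = Max4PC E p q"
proof -
  have "gdist (del_vert_E E u) s t = gdist E s t" if "s \<in> V - {u}" "t \<in> V - {u}" for s t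
    using that connected by (intro Pu.gdist_del_vert_E) auto
  then show ?thesis using assms by (elim pairsE) (simp add: Max4PC_doubleton max4_def)
qed

lemma rank_Max4PC_del_leaf:
  assumes "3 < card V"
  shows "rank_Max4PC V E = rank_Max4PC (del_vert_V V u) (del_vert_E E u)"
proof -
  have "mat_rank (pairs V) (pairs V) (Max4PC E) = mat_rank (pairs (V - {u})) (pairs (V - {u})) (Max4PC E)"
    using finite_pairs[OF finite_vertices] Max4PC_commute Max4PC_row_in_span[OF assms]
    by (intro mat_rank_reduce_symmetric) (auto simp: pairs_def)
  also have "\<dots> = mat_rank (pairs (V - {u})) (pairs (V - {u})) (Max4PC (del_vert_E E u))"
    by (intro mat_rank_cong) (simp add: Max4PC_del_leaf)
  finally show ?thesis unfolding rank_Max4PC_def del_vert_V_def .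
qed

end

theorem mainTheorem5:
  fixes V :: "'a set" and E :: "'a set set" and u v w :: 'a
  assumes "is_tree V E"
    and "card V > 3"
    and "is_leaf V E u" and "is_leaf V E v" and "u \<noteq> v"
    and "{u, w} \<in> E" and "{v, w} \<in> E"
  shows "rank_Max4PC V E = rank_Max4PC (del_vert_V V u) (del_vert_E E u)
       \<and> rank_Max4PC V E = rank_Max4PC (del_vert_V V v) (del_vert_E E v)"
proof -
  interpret cherry V E u v w
    using is_tree_connected_graph[OF assms(1)] assms(3-7) by (simp add: cherry_def cherry_axioms_def)
  show ?thesis
    using rank_Max4PC_del_leaf cherry.rank_Max4PC_del_leaf[OF cherry_swap] assms(2) by simp
qed

end
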